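(* Let the setting be as in the context. For any $p\ge2$ there exists $C_p>0$ such that for all $\varepsilon>0$ and $x,y\in\mathbb{R}$, \[ \mathbb{E}\big[|\widetilde W_\varepsilon(x)-\widetilde W_\varepsilon(y)|^p\big]\le C_p|x-y|^{pH}. \]
   Context: Let $\{g(x)\}_{x\in\mathbb{R}}$ be a continuous, centered, stationary Gaussian field with $\mathbb{E}[g(0)^2]=1$ and covariance $R_g(x)=\kappa_g|x|^{-\alpha}L(|x|)$ for $x\neq0$, where $\alpha\in(0,1)$, $\kappa_g>0$, $L$ slowly varying at infinity (taken $L\equiv1$ in asymptotic statements), with spectral measure satisfying $\int|\xi|^{\alpha-1}\mu_g(d\xi)<\infty$. Let $H=1-\alpha/2$ and $\widetilde W_\varepsilon(x):=\varepsilon^{-\alpha/2}\int_0^x g(y/\varepsilon)\,dy$. *)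

theory Defs
  imports "HOL-Probability.Probability"
begin

definition slowly_varying :: "(real \<Rightarrow> real) \<Rightarrow> bool" where
  "slowly_varying L \<longleftrightarrow>
     (\<forall>\<^sub>F t in at_top. L t > 0) \<and>
     (\<forall>lam>0. ((\<lambda>t. L (lam * t) / L t) \<longlongrightarrow> 1) at_top)"

definition centered_gaussian_rv :: "'a measure \<Rightarrow> ('a \<Rightarrow> real) \<Rightarrow> real \<Rightarrow> bool" where
  "centered_gaussian_rv M X v \<longleftrightarrow>
     X \<in> borel_measurable M \<and> v \<ge> 0 \<and>
     (if v = 0 then (AE \<omega> in M. X \<omega> = 0)
      else distributed M lborel X (normal_density 0 (sqrt v)))"

definition centered_gaussian_field :: "'a measure \<Rightarrow> (real \<Rightarrow> 'a \<Rightarrow> real) \<Rightarrow> bool" where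
  "centered_gaussian_field M g \<longleftrightarrow>
     (\<forall>x. g x \<in> borel_measurable M) \<and>
     (\<forall>(xs::real list) (cs::real list). length xs = length cs \<longrightarrow>
        (\<exists>v. centered_gaussian_rv M (\<lambda>\<omega>. \<Sum>i<length xs. cs ! i * g (xs ! i) \<omega>) v))"

definition stationary_cov :: "'a measure \<Rightarrow> (real \<Rightarrow> 'a \<Rightarrow> real) \<Rightarrow> (real \<Rightarrow> real) \<Rightarrow> bool" where
  "stationary_cov M g R \<longleftrightarrow>
     (\<forall>x y. integrable M (\<lambda>\<omega>. g x \<omega> * g y \<omega>) \<and>
            (\<integral>\<omega>. g x \<omega> * g y \<omega> \<partial>M) = R (x - y))"

definition W_tilde :: "real \<Rightarrow> (real \<Rightarrow> 'a \<Rightarrow> real) \<Rightarrow> real \<Rightarrow> real \<Rightarrow> 'a \<Rightarrow> real" where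
  "W_tilde \<alpha> g \<epsilon> x \<omega> = \<epsilon> powr (-\<alpha>/2) * (LBINT y=0..x. g (y / \<epsilon>) \<omega>)"

end

theory Submission
  imports Defs
begin

(* W_eps(x) - W_eps(y) is the pathwise limit of left Riemann sums of g(./eps). Each Riemann sum is a
   finite linear combination of values of g, hence centered Gaussian, so its p-th absolute moment
   is bounded by a constant times its variance to the power p/2. By stationarity that variance is
   a double sum of R over a grid of mesh (x - y)/(n eps); since |R z| <= min(1, C |z|^-alpha),
   summing over the index distance bounds it by 2 eps^-alpha (x - y)^2 / n + C' (x - y)^(2 - alpha),
   and the first term vanishes as n grows. Fatou's lemma carries the bound over to the limit,
   which also sidesteps any measurability question for W_eps itself. *)

lemma LBINT_0_has_real_derivative:
  fixes f :: "real \<Rightarrow> real"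
  assumes "continuous_on UNIV f"
  shows "((\<lambda>u. LBINT y=0..u. f y) has_real_derivative f x) (at x)"
proof -
  have "((\<lambda>u. LBINT y=0..u. f y) has_vector_derivative f x) (at x within {-\<bar>x\<bar>-1..\<bar>x\<bar>+1})"
    using interval_integral_FTC2[of "-\<bar>x\<bar>-1" 0 "\<bar>x\<bar>+1" f x] continuous_on_subset[OF assms]
    by (simp add: zero_ereal_def)
  then show ?thesis
    by (simp add: at_within_Icc_at has_real_derivative_iff_has_vector_derivative)
qed

lemma antiderivative_increment_approx:
  fixes f F :: "real \<Rightarrow> real"
  assumes h: "h > 0"
    and F: "\<And>t. t \<in> {u..u+h} \<Longrightarrow> (F has_real_derivative f t) (at t)"
    and f: "\<And>t. t \<in> {u..u+h} \<Longrightarrow> \<bar>f t - f u\<bar> \<le> e"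
  shows "\<bar>F (u + h) - F u - h * f u\<bar> \<le> h * e"
proof -
  obtain z where z: "u < z" "z < u + h" "F (u + h) - F u = h * f z"
    using MVT2[of u "u + h" F f] h F by fastforce
  have "h * \<bar>f z - f u\<bar> \<le> h * e"
    using z h by (intro mult_left_mono f) auto
  then show ?thesis
    using z(3) h by (simp add: abs_mult flip: right_diff_distrib)
qed

lemma left_riemann_sum_error_le:
  fixes f F :: "real \<Rightarrow> real"
  assumes n: "n > 0" and yx: "y < x"
    and F: "\<And>t. t \<in> {y..x} \<Longrightarrow> (F has_real_derivative f t) (at t)"
    and f: "\<And>s t. s \<in> {y..x} \<Longrightarrow> t \<in> {y..x} \<Longrightarrow> \<bar>t - s\<bar> \<le> (x - y) / n \<Longrightarrow> \<bar>f t - f s\<bar> \<le> e"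
  shows "\<bar>(x - y) / n * (\<Sum>i<n. f (y + real i * (x - y) / n)) - (F x - F y)\<bar> \<le> (x - y) * e"
proof -
  define h where "h = (x - y) / n"
  define t where "t i = y + real i * h" for i :: nat
  have h: "h > 0" and nh: "real n * h = x - y"
    using n yx by (auto simp: h_def)
  have cell: "\<bar>F (t (Suc i)) - F (t i) - h * f (t i)\<bar> \<le> h * e" if "i < n" for i
  proof -
    have "real (Suc i) * h \<le> real n * h"
      using that h by (intro mult_right_mono) auto
    then have cell_sub: "{t i..t i + h} \<subseteq> {y..x}"
      using h nh by (auto simp: t_def algebra_simps)
    have "t (Suc i) = t i + h"
      by (simp add: t_def algebra_simps)
    moreover have "\<bar>F (t i + h) - F (t i) - h * f (t i)\<bar> \<le> h * e"
    proof (rule antiderivative_increment_approx[OF h])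
      fix s assume "s \<in> {t i..t i + h}"
      then show "(F has_real_derivative f s) (at s)" and "\<bar>f s - f (t i)\<bar> \<le> e"
        using F f[of "t i" s] cell_sub by (auto simp: h_def)
    qed
    ultimately show ?thesis
      by simp
  qed
  have "F x - F y = (\<Sum>i<n. F (t (Suc i)) - F (t i))"
    using sum_lessThan_telescope[of "\<lambda>i. F (t i)" n] nh by (simp add: t_def)
  then have "\<bar>(x - y) / n * (\<Sum>i<n. f (y + real i * (x - y) / n)) - (F x - F y)\<bar>
      = \<bar>\<Sum>i<n. F (t (Suc i)) - F (t i) - h * f (t i)\<bar>"
    by (simp add: sum_distrib_left sum_subtractf t_def h_def)
  also have "\<dots> \<le> (\<Sum>i<n. h * e)"
    by (intro order_trans[OF sum_abs] sum_mono cell) auto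
  also have "\<dots> = (x - y) * e"
    using nh by simp
  finally show ?thesis .
qed

lemma left_riemann_sum_tendsto:
  fixes f F :: "real \<Rightarrow> real"
  assumes yx: "y < x" and f: "continuous_on {y..x} f"
    and F: "\<And>t. t \<in> {y..x} \<Longrightarrow> (F has_real_derivative f t) (at t)"
  shows "(\<lambda>n. (x - y) / n * (\<Sum>i<n. f (y + real i * (x - y) / n))) \<longlonglongrightarrow> F x - F y"
proof (rule LIMSEQ_I)
  fix e :: real assume e: "e > 0"
  have "uniformly_continuous_on {y..x} f"
    using f by (rule compact_uniformly_continuous) simp
  moreover have "e / (2 * (x - y)) > 0"
    using e yx by simp
  ultimately obtain d where d: "d > 0"
    and dd: "\<And>s t. s \<in> {y..x} \<Longrightarrow> t \<in> {y..x} \<Longrightarrow> dist t s < d \<Longrightarrow> dist (f t) (f s) < e / (2 * (x - y))"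
    unfolding uniformly_continuous_on_def by metis
  obtain N :: nat where N: "(x - y) / d < N"
    using reals_Archimedean2 by blast
  have "norm ((x - y) / n * (\<Sum>i<n. f (y + real i * (x - y) / n)) - (F x - F y)) < e" if "n \<ge> N" for n
  proof -
    have "0 < (x - y) / d"
      using yx d by simp
    then have n: "n > 0" and "(x - y) / d < n"
      using N that by (auto intro: less_le_trans)
    then have "(x - y) / n < d"
      using d by (simp add: field_simps)
    then have "\<bar>(x - y) / n * (\<Sum>i<n. f (y + real i * (x - y) / n)) - (F x - F y)\<bar> \<le> (x - y) * (e / (2 * (x - y)))"
      using dd by (intro left_riemann_sum_error_le[OF n yx F]) (auto simp: dist_real_def less_imp_le)
    also have "\<dots> = e / 2"
      using yx by (simp add: field_simps)
    also have "\<dots> < e"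
      using e by simp
    finally show ?thesis
      by simp
  qed
  then show "\<exists>N. \<forall>n\<ge>N. norm ((x - y) / n * (\<Sum>i<n. f (y + real i * (x - y) / n)) - (F x - F y)) < e"
    by blast
qed

lemma abs_powr_le_powr_plus_even_power:
  fixes x s p :: real and k :: nat
  assumes s: "s > 0" and p: "0 \<le> p" "p \<le> 2 * real k"
  shows "\<bar>x\<bar> powr p \<le> s powr p + s powr (p - 2 * real k) * x ^ (2 * k)"
proof (cases "\<bar>x\<bar> \<le> s")
  case True
  then have "\<bar>x\<bar> powr p \<le> s powr p"
    using p by (intro powr_mono2) auto
  moreover have "0 \<le> s powr (p - 2 * real k) * x ^ (2 * k)"
    by (simp add: zero_le_even_power)
  ultimately show ?thesis by linarith
next
  case False
  then have "\<bar>x\<bar> / s \<ge> 1"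
    using s by simp
  then have "s powr p * (\<bar>x\<bar> / s) powr p \<le> s powr p * (\<bar>x\<bar> / s) powr (2 * real k)"
    using p by (intro mult_left_mono powr_mono) auto
  moreover have "\<bar>x\<bar> powr (2 * real k) = x ^ (2 * k)"
    using False s powr_realpow[of "\<bar>x\<bar>" "2 * k"] by (simp add: power_even_abs)
  ultimately have "\<bar>x\<bar> powr p \<le> s powr (p - 2 * real k) * x ^ (2 * k)"
    using s by (simp add: powr_divide powr_diff)
  then show ?thesis
    by (smt (verit) powr_ge_zero)
qed

lemma nn_integral_normal_abs_powr_le:
  fixes s p :: real and k :: nat
  assumes s: "s > 0" and p: "0 \<le> p" "p \<le> 2 * real k"
  shows "(\<integral>\<^sup>+x. ennreal (normal_density 0 s x) * ennreal (\<bar>x\<bar> powr p) \<partial>lborel)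
    \<le> ennreal ((1 + fact (2 * k) / (2 ^ k * fact k)) * s powr p)"
proof -
  define m where "m = (fact (2 * k) / (2 ^ k * fact k) :: real)"
  define B where "B x = s powr p + s powr (p - 2 * real k) * x ^ (2 * k)" for x
  have int_moment: "integrable lborel (\<lambda>x. normal_density 0 s x * x ^ (2 * k))"
    using integrable_normal_moment[OF s, of 0 "2 * k"] by simp
  have moment: "(\<integral>x. normal_density 0 s x * x ^ (2 * k) \<partial>lborel) = s ^ (2 * k) * m"
    using integral_normal_moment_even[OF s, of 0 k] s
    by (simp add: m_def power_divide power_mult field_simps flip: power_mult_distrib)
       (simp add: power_mult[symmetric] mult.commute)
  have int_B: "integrable lborel (\<lambda>x. normal_density 0 s x * B x)"
    using int_moment integrable_normal_density[OF s, of 0]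
    by (simp add: B_def distrib_left mult.left_commute[of _ "s powr _"])
  have "(\<integral>\<^sup>+x. ennreal (normal_density 0 s x) * ennreal (\<bar>x\<bar> powr p) \<partial>lborel)
      \<le> (\<integral>\<^sup>+x. ennreal (normal_density 0 s x * B x) \<partial>lborel)"
    using abs_powr_le_powr_plus_even_power[OF s p]
    by (intro nn_integral_mono) (auto simp: B_def ennreal_mult'[symmetric] intro!: ennreal_leI mult_left_mono)
  also have "\<dots> = ennreal (\<integral>x. normal_density 0 s x * B x \<partial>lborel)"
    using int_B by (intro nn_integral_eq_integral) (auto simp: B_def zero_le_even_power)
  also have "(\<integral>x. normal_density 0 s x * B x \<partial>lborel) = s powr p + s powr (p - 2 * real k) * (s ^ (2 * k) * m)"
    using int_moment moment integrable_normal_density[OF s, of 0] integral_normal_density[OF s, of 0]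
    by (simp add: B_def distrib_left mult.left_commute[of _ "s powr _"])
  also have "\<dots> = (1 + m) * s powr p"
    using s by (simp add: powr_diff powr_realpow[symmetric] field_simps)
  finally show ?thesis
    by (simp add: m_def)
qed

lemma centered_gaussian_rv_second_moment:
  assumes "centered_gaussian_rv M X v"
  shows "(\<integral>\<omega>. (X \<omega>)\<^sup>2 \<partial>M) = v"
proof (cases "v = 0")
  case True
  then have "AE \<omega> in M. X \<omega> = 0" and "X \<in> borel_measurable M"
    using assms by (auto simp: centered_gaussian_rv_def)
  then have "(\<integral>\<omega>. (X \<omega>)\<^sup>2 \<partial>M) = (\<integral>\<omega>. 0 \<partial>M)"
    by (intro integral_cong_AE) auto
  then show ?thesis
    using True by simp
next
  case False
  define s where "s = sqrt v"
  have "v \<ge> 0"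
    using assms by (simp add: centered_gaussian_rv_def)
  then have s: "s > 0" and "s\<^sup>2 = v"
    using False by (auto simp: s_def)
  have "distributed M lborel X (normal_density 0 s)"
    using assms False by (simp add: centered_gaussian_rv_def s_def)
  then have "(\<integral>\<omega>. (X \<omega>)\<^sup>2 \<partial>M) = (\<integral>x. normal_density 0 s x * x\<^sup>2 \<partial>lborel)"
    using distributed_integral[of M lborel X _ "\<lambda>x. x\<^sup>2"] by simp
  also have "\<dots> = v"
    using integral_normal_moment_even[OF s, of 0 1] \<open>s\<^sup>2 = v\<close> by simp
  finally show ?thesis .
qed

lemma centered_gaussian_rv_abs_moment_le:
  assumes "centered_gaussian_rv M X v" and p: "0 \<le> p" "p \<le> 2 * real k"
  shows "(\<integral>\<^sup>+\<omega>. ennreal (\<bar>X \<omega>\<bar> powr p) \<partial>M) \<le> ennreal ((1 + fact (2 * k) / (2 ^ k * fact k)) * v powr (p / 2))"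
proof (cases "v = 0")
  case True
  then have "AE \<omega> in M. X \<omega> = 0"
    using assms by (simp add: centered_gaussian_rv_def)
  then have "(\<integral>\<^sup>+\<omega>. ennreal (\<bar>X \<omega>\<bar> powr p) \<partial>M) = (\<integral>\<^sup>+\<omega>. 0 \<partial>M)"
    by (intro nn_integral_cong_AE) auto
  then show ?thesis
    by simp
next
  case False
  define s where "s = sqrt v"
  have "v \<ge> 0"
    using assms by (simp add: centered_gaussian_rv_def)
  then have s: "s > 0" and "s powr p = v powr (p / 2)"
    using False by (auto simp: s_def powr_half_sqrt[symmetric] powr_powr)
  have "distributed M lborel X (normal_density 0 s)"
    using assms False by (simp add: centered_gaussian_rv_def s_def)
  then have "(\<integral>\<^sup>+\<omega>. ennreal (\<bar>X \<omega>\<bar> powr p) \<partial>M)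
      = (\<integral>\<^sup>+x. ennreal (normal_density 0 s x) * ennreal (\<bar>x\<bar> powr p) \<partial>lborel)"
    using distributed_nn_integral[of M lborel X _ "\<lambda>x. ennreal (\<bar>x\<bar> powr p)"] by simp
  then show ?thesis
    using nn_integral_normal_abs_powr_le[OF s p] \<open>s powr p = v powr (p / 2)\<close> by simp
qed

lemma sum_powr_neg_le:
  fixes a :: real
  assumes a: "0 < a" "a < 1"
  shows "(\<Sum>d=1..m. real d powr (-a)) \<le> real m powr (1 - a) / (1 - a)"
proof (induction m)
  case 0
  then show ?case by simp
next
  case (Suc m)
  have "real (Suc m) powr (-a) \<le> (real (Suc m) powr (1 - a) - real m powr (1 - a)) / (1 - a)"
  proof (cases "m = 0")
    case True
    then show ?thesis using a by simp
  next
    case False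
    have "\<exists>z. real m < z \<and> z < real (Suc m) \<and>
        real (Suc m) powr (1 - a) - real m powr (1 - a) = (real (Suc m) - real m) * ((1 - a) * z powr (1 - a - 1))"
    proof (rule MVT2)
      fix x :: real assume "real m \<le> x" "x \<le> real (Suc m)"
      then have "x > 0" using False by linarith
      then show "((\<lambda>t. t powr (1 - a)) has_real_derivative (1 - a) * x powr (1 - a - 1)) (at x)"
        by (auto intro!: derivative_eq_intros)
    qed simp
    then obtain z where z: "real m < z" "z < real (Suc m)"
      "real (Suc m) powr (1 - a) - real m powr (1 - a) = (1 - a) * z powr (-a)"
      by auto
    have "real (Suc m) powr (-a) \<le> z powr (-a)"
      using z False a by (intro powr_mono2') auto
    then show ?thesis
      using z(3) a by simp
  qed
  then show ?case
    using Suc by (simp add: diff_divide_distrib)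
qed

lemma sum_sum_index_distance_le:
  fixes \<phi> :: "nat \<Rightarrow> real"
  assumes nonneg: "\<And>d. \<phi> d \<ge> 0"
  shows "(\<Sum>i<n. \<Sum>j<n. \<phi> (if i \<le> j then j - i else i - j)) \<le> 2 * real n * (\<Sum>d<n. \<phi> d)"
proof -
  have "(\<Sum>j<n. \<phi> (if i \<le> j then j - i else i - j)) \<le> 2 * (\<Sum>d<n. \<phi> d)" if i: "i < n" for i
  proof -
    have split: "{..<n} = {i..<n} \<union> {..<i}"
      using i by auto
    have "(\<Sum>j<n. \<phi> (if i \<le> j then j - i else i - j))
        = (\<Sum>j\<in>{i..<n}. \<phi> (j - i)) + (\<Sum>j\<in>{..<i}. \<phi> (i - j))"
      by (subst split, subst sum.union_disjoint) (auto intro!: arg_cong2[where f="(+)"] sum.cong)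
    also have "(\<Sum>j\<in>{i..<n}. \<phi> (j - i)) = (\<Sum>d\<in>(\<lambda>j. j - i) ` {i..<n}. \<phi> d)"
      by (subst sum.reindex) (auto simp: inj_on_def)
    also have "\<dots> \<le> (\<Sum>d<n. \<phi> d)"
      using nonneg by (intro sum_mono2) auto
    also have "(\<Sum>j\<in>{..<i}. \<phi> (i - j)) = (\<Sum>d\<in>(\<lambda>j. i - j) ` {..<i}. \<phi> d)"
      by (subst sum.reindex) (auto simp: inj_on_def)
    also have "\<dots> \<le> (\<Sum>d<n. \<phi> d)"
      using nonneg i by (intro sum_mono2) auto
    finally show ?thesis by simp
  qed
  then have "(\<Sum>i<n. \<Sum>j<n. \<phi> (if i \<le> j then j - i else i - j)) \<le> (\<Sum>i<n. 2 * (\<Sum>d<n. \<phi> d))"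
    by (intro sum_mono) auto
  then show ?thesis by simp
qed

lemma grid_cov_sum_le:
  fixes R :: "real \<Rightarrow> real" and a C \<delta> :: real
  assumes a: "0 < a" "a < 1"
    and R1: "\<And>z. \<bar>R z\<bar> \<le> 1" and R2: "\<And>z. z \<noteq> 0 \<Longrightarrow> \<bar>R z\<bar> \<le> C * \<bar>z\<bar> powr (-a)"
    and \<delta>: "\<delta> > 0"
  shows "(\<Sum>i<n. \<Sum>j<n. R (real i * \<delta> - real j * \<delta>))
    \<le> 2 * real n * (1 + C * \<delta> powr (-a) * real n powr (1 - a) / (1 - a))"
proof -
  have C: "C \<ge> 0"
    using R2[of 1] abs_ge_zero[of "R 1"] by simp
  define \<phi> where "\<phi> d = (if d = 0 then 1 else C * (real d * \<delta>) powr (-a))" for d :: nat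
  have \<phi>_nonneg: "\<phi> d \<ge> 0" for d
    using C by (simp add: \<phi>_def)
  have R_le_\<phi>: "R (real i * \<delta> - real j * \<delta>) \<le> \<phi> (if i \<le> j then j - i else i - j)" for i j
  proof (cases "i = j")
    case True
    then show ?thesis using R1[of 0] by (simp add: \<phi>_def)
  next
    case False
    then have "real i * \<delta> - real j * \<delta> \<noteq> 0" and "\<bar>real i * \<delta> - real j * \<delta>\<bar> = real (if i \<le> j then j - i else i - j) * \<delta>"
      using \<delta> by (auto simp: abs_if of_nat_diff left_diff_distrib)
    then show ?thesis
      using R2[of "real i * \<delta> - real j * \<delta>"] False by (auto simp: \<phi>_def)
  qed
  have sum_\<phi>: "(\<Sum>d<n. \<phi> d) \<le> 1 + C * \<delta> powr (-a) * real n powr (1 - a) / (1 - a)"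
  proof (cases n)
    case 0
    then show ?thesis using a C by simp
  next
    case (Suc m)
    have "(\<Sum>d<n. \<phi> d) = 1 + C * \<delta> powr (-a) * (\<Sum>d=1..m. real d powr (-a))"
      unfolding Suc sum.lessThan_Suc_shift
      by (simp add: \<phi>_def sum.atLeast1_atMost_eq sum_distrib_left powr_mult mult_ac del: of_nat_Suc)
    also have "\<dots> \<le> 1 + C * \<delta> powr (-a) * (real n powr (1 - a) / (1 - a))"
    proof -
      have "real m powr (1 - a) / (1 - a) \<le> real n powr (1 - a) / (1 - a)"
        using Suc a by (intro divide_right_mono powr_mono2) auto
      then show ?thesis
        using sum_powr_neg_le[OF a, of m] C by (intro add_left_mono mult_left_mono) auto
    qed
    finally show ?thesis by simp
  qed
  have "(\<Sum>i<n. \<Sum>j<n. R (real i * \<delta> - real j * \<delta>)) \<le> (\<Sum>i<n. \<Sum>j<n. \<phi> (if i \<le> j then j - i else i - j))"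
    by (intro sum_mono R_le_\<phi>)
  also have "\<dots> \<le> 2 * real n * (\<Sum>d<n. \<phi> d)"
    by (rule sum_sum_index_distance_le[OF \<phi>_nonneg])
  also have "\<dots> \<le> 2 * real n * (1 + C * \<delta> powr (-a) * real n powr (1 - a) / (1 - a))"
    using sum_\<phi> by (intro mult_left_mono) auto
  finally show ?thesis .
qed

lemma riemann_sum_variance_le:
  fixes R :: "real \<Rightarrow> real" and a C e \<Delta> y :: real and n :: nat
  assumes a: "0 < a" "a < 1"
    and R1: "\<And>z. \<bar>R z\<bar> \<le> 1" and R2: "\<And>z. z \<noteq> 0 \<Longrightarrow> \<bar>R z\<bar> \<le> C * \<bar>z\<bar> powr (-a)"
    and e: "e > 0" and n: "n > 0" and \<Delta>: "\<Delta> > 0"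
  shows "(\<Sum>i<n. \<Sum>j<n. (e powr (-a/2) * (\<Delta>/n)) * (e powr (-a/2) * (\<Delta>/n)) *
            R ((y + real i * (\<Delta>/n)) / e - (y + real j * (\<Delta>/n)) / e))
    \<le> 2 * e powr (-a) * \<Delta>\<^sup>2 / n + 2 * C / (1 - a) * \<Delta> powr (2 - a)"
proof -
  define h where "h = \<Delta> / n"
  define \<delta> where "\<delta> = h / e"
  have h: "h > 0" and \<delta>: "\<delta> > 0" and hn: "h * n = \<Delta>"
    using \<Delta> n e by (auto simp: h_def \<delta>_def)
  have diff: "(y + real i * h) / e - (y + real j * h) / e = real i * \<delta> - real j * \<delta>" for i j
    using e by (simp add: \<delta>_def field_simps)
  have cc: "(e powr (-a/2) * h) * (e powr (-a/2) * h) = e powr (-a) * h\<^sup>2"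
    by (simp add: power2_eq_square mult_ac flip: powr_add)
  have "(\<Sum>i<n. \<Sum>j<n. (e powr (-a/2) * h) * (e powr (-a/2) * h) * R ((y + real i * h) / e - (y + real j * h) / e))
      = e powr (-a) * h\<^sup>2 * (\<Sum>i<n. \<Sum>j<n. R (real i * \<delta> - real j * \<delta>))"
    by (simp only: diff cc sum_distrib_left)
  also have "\<dots> \<le> e powr (-a) * h\<^sup>2 * (2 * real n * (1 + C * \<delta> powr (-a) * real n powr (1 - a) / (1 - a)))"
    using grid_cov_sum_le[OF a R1 R2 \<delta>] by (intro mult_left_mono) auto
  also have "\<dots> = 2 * e powr (-a) * \<Delta>\<^sup>2 / n + 2 * C / (1 - a) * \<Delta> powr (2 - a)"
  proof -
    have "e powr (-a) * h\<^sup>2 * (2 * real n) = 2 * e powr (-a) * \<Delta>\<^sup>2 / n"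
      using n by (simp add: h_def power2_eq_square field_simps)
    moreover have "e powr (-a) * h\<^sup>2 * real n * (\<delta> powr (-a) * real n powr (1 - a)) = \<Delta> powr (2 - a)"
    proof -
      have "e powr (-a) * \<delta> powr (-a) = h powr (-a)"
        using e h by (simp add: \<delta>_def powr_divide powr_minus divide_simps)
      moreover have "h\<^sup>2 * h powr (-a) = h powr (2 - a)" and "real n * real n powr (1 - a) = real n powr (2 - a)"
        using h n by (simp_all add: powr_diff powr_minus power2_eq_square field_simps flip: powr_realpow)
      moreover have "h powr (2 - a) * real n powr (2 - a) = \<Delta> powr (2 - a)"
        using h n hn by (simp flip: powr_mult)
      ultimately show ?thesis
        by (metis (no_types, lifting) mult.assoc mult.left_commute)
    qed
    ultimately show ?thesis
      by (simp add: algebra_simps)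
  qed
  finally show ?thesis
    by (simp add: h_def)
qed

lemma riemann_sum_variance_eventually_le:
  fixes R :: "real \<Rightarrow> real" and a C e \<Delta> y :: real
  assumes a: "0 < a" "a < 1"
    and R1: "\<And>z. \<bar>R z\<bar> \<le> 1" and R2: "\<And>z. z \<noteq> 0 \<Longrightarrow> \<bar>R z\<bar> \<le> C * \<bar>z\<bar> powr (-a)"
    and e: "e > 0" and \<Delta>: "\<Delta> > 0"
  shows "eventually (\<lambda>n. (\<Sum>i<n. \<Sum>j<n. (e powr (-a/2) * (\<Delta>/n)) * (e powr (-a/2) * (\<Delta>/n)) *
            R ((y + real i * (\<Delta>/n)) / e - (y + real j * (\<Delta>/n)) / e))
    \<le> (1 + 2 * C / (1 - a)) * \<Delta> powr (2 - a)) sequentially"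
proof -
  have "(\<lambda>n. 2 * e powr (-a) * \<Delta>\<^sup>2 / real n) \<longlonglongrightarrow> 0"
    by (intro tendsto_divide_0[OF tendsto_const] filterlim_at_top_imp_at_infinity filterlim_real_sequentially)
  then have "eventually (\<lambda>n. 2 * e powr (-a) * \<Delta>\<^sup>2 / real n < \<Delta> powr (2 - a)) sequentially"
    using \<Delta> by (intro order_tendstoD(2)) auto
  then show ?thesis
    using eventually_gt_at_top[of 0]
  proof eventually_elim
    case (elim n)
    then show ?case
      using riemann_sum_variance_le[OF a R1 R2 e _ \<Delta>, of n y] by (simp add: algebra_simps)
  qed
qed

lemma centered_gaussian_field_sum:
  fixes n :: nat and c a :: "nat \<Rightarrow> real"
  assumes "centered_gaussian_field M g"
  shows "\<exists>v. centered_gaussian_rv M (\<lambda>\<omega>. \<Sum>i<n. c i * g (a i) \<omega>) v"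
proof -
  define xs where "xs = map a [0..<n]"
  define cs where "cs = map c [0..<n]"
  have "length xs = length cs"
    by (simp add: xs_def cs_def)
  then have "\<exists>v. centered_gaussian_rv M (\<lambda>\<omega>. \<Sum>i<length xs. cs ! i * g (xs ! i) \<omega>) v"
    using assms by (simp add: centered_gaussian_field_def)
  moreover have "(\<Sum>i<length xs. cs ! i * g (xs ! i) \<omega>) = (\<Sum>i<n. c i * g (a i) \<omega>)" for \<omega>
    by (simp add: xs_def cs_def)
  ultimately show ?thesis
    by simp
qed

lemma stationary_cov_integral_sum_square:
  fixes n :: nat and c a :: "nat \<Rightarrow> real"
  assumes "stationary_cov M g R"
  shows "(\<integral>\<omega>. (\<Sum>i<n. c i * g (a i) \<omega>)\<^sup>2 \<partial>M) = (\<Sum>i<n. \<Sum>j<n. c i * c j * R (a i - a j))"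
proof -
  have "(\<lambda>\<omega>. (\<Sum>i<n. c i * g (a i) \<omega>)\<^sup>2) = (\<lambda>\<omega>. \<Sum>i<n. \<Sum>j<n. c i * c j * (g (a i) \<omega> * g (a j) \<omega>))"
    by (simp add: power2_eq_square sum_product mult_ac)
  then show ?thesis
    using assms by (simp add: stationary_cov_def integral_sum integrable_sum)
qed

lemma centered_gaussian_field_sum_abs_moment_le:
  fixes n :: nat and c a :: "nat \<Rightarrow> real" and k :: nat
  assumes gauss: "centered_gaussian_field M g" and stat: "stationary_cov M g R"
    and p: "0 \<le> p" "p \<le> 2 * real k"
  shows "(\<integral>\<^sup>+\<omega>. ennreal (\<bar>\<Sum>i<n. c i * g (a i) \<omega>\<bar> powr p) \<partial>M)
    \<le> ennreal ((1 + fact (2 * k) / (2 ^ k * fact k)) * (\<Sum>i<n. \<Sum>j<n. c i * c j * R (a i - a j)) powr (p / 2))"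
proof -
  obtain v where v: "centered_gaussian_rv M (\<lambda>\<omega>. \<Sum>i<n. c i * g (a i) \<omega>) v"
    using centered_gaussian_field_sum[OF gauss] by blast
  have "v = (\<Sum>i<n. \<Sum>j<n. c i * c j * R (a i - a j))"
    using centered_gaussian_rv_second_moment[OF v] stationary_cov_integral_sum_square[OF stat] by simp
  then show ?thesis
    using centered_gaussian_rv_abs_moment_le[OF v p] by simp
qed

lemma W_tilde_diff_riemann_sum_tendsto:
  assumes cont: "continuous_on UNIV (\<lambda>x. g x \<omega>)" and eps: "\<epsilon> > 0" and yx: "y < x"
  shows "(\<lambda>n. \<Sum>i<n. \<epsilon> powr (-\<alpha>/2) * ((x - y) / n) * g ((y + real i * ((x - y) / n)) / \<epsilon>) \<omega>)
    \<longlonglongrightarrow> W_tilde \<alpha> g \<epsilon> x \<omega> - W_tilde \<alpha> g \<epsilon> y \<omega>"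
proof -
  have "continuous_on UNIV (\<lambda>u::real. u / \<epsilon>)"
    using eps by (intro continuous_on_divide continuous_on_id continuous_on_const) auto
  then have cont_scaled: "continuous_on UNIV (\<lambda>u. g (u / \<epsilon>) \<omega>)"
    using continuous_on_compose2[OF cont] by blast
  have "(\<lambda>n. (x - y) / n * (\<Sum>i<n. g ((y + real i * (x - y) / n) / \<epsilon>) \<omega>))
      \<longlonglongrightarrow> (LBINT u=0..x. g (u / \<epsilon>) \<omega>) - (LBINT u=0..y. g (u / \<epsilon>) \<omega>)"
    by (rule left_riemann_sum_tendsto[OF yx continuous_on_subset[OF cont_scaled subset_UNIV]
          LBINT_0_has_real_derivative[OF cont_scaled]])
  then have "(\<lambda>n. \<epsilon> powr (-\<alpha>/2) * ((x - y) / n * (\<Sum>i<n. g ((y + real i * (x - y) / n) / \<epsilon>) \<omega>)))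
      \<longlonglongrightarrow> \<epsilon> powr (-\<alpha>/2) * ((LBINT u=0..x. g (u / \<epsilon>) \<omega>) - (LBINT u=0..y. g (u / \<epsilon>) \<omega>))"
    by (rule tendsto_mult_left)
  then show ?thesis
    by (simp add: W_tilde_def right_diff_distrib sum_distrib_left mult_ac)
qed

lemma nn_integral_abs_powr_le_of_tendsto:
  fixes S :: "nat \<Rightarrow> 'a \<Rightarrow> real" and B :: ennreal
  assumes S: "\<And>n. S n \<in> borel_measurable M"
    and lim: "\<And>\<omega>. \<omega> \<in> space M \<Longrightarrow> (\<lambda>n. S n \<omega>) \<longlonglongrightarrow> Z \<omega>"
    and p: "p > 0"
    and bound: "eventually (\<lambda>n. (\<integral>\<^sup>+\<omega>. ennreal (\<bar>S n \<omega>\<bar> powr p) \<partial>M) \<le> B) sequentially"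
  shows "(\<integral>\<^sup>+\<omega>. ennreal (\<bar>Z \<omega>\<bar> powr p) \<partial>M) \<le> B"
proof -
  have "(\<integral>\<^sup>+\<omega>. ennreal (\<bar>Z \<omega>\<bar> powr p) \<partial>M) = (\<integral>\<^sup>+\<omega>. liminf (\<lambda>n. ennreal (\<bar>S n \<omega>\<bar> powr p)) \<partial>M)"
  proof (intro nn_integral_cong)
    fix \<omega> assume "\<omega> \<in> space M"
    then have "(\<lambda>n. ennreal (\<bar>S n \<omega>\<bar> powr p)) \<longlonglongrightarrow> ennreal (\<bar>Z \<omega>\<bar> powr p)"
      using p by (intro tendsto_ennrealI tendsto_powr' tendsto_rabs lim tendsto_const) auto
    then show "ennreal (\<bar>Z \<omega>\<bar> powr p) = liminf (\<lambda>n. ennreal (\<bar>S n \<omega>\<bar> powr p))"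
      by (intro lim_imp_Liminf[symmetric]) auto
  qed
  also have "\<dots> \<le> liminf (\<lambda>n. \<integral>\<^sup>+\<omega>. ennreal (\<bar>S n \<omega>\<bar> powr p) \<partial>M)"
    using S by (intro nn_integral_liminf) measurable
  also have "\<dots> \<le> B"
    by (rule Liminf_le[OF _ bound]) simp
  finally show ?thesis .
qed

lemma W_tilde_increment_moment_le:
  fixes g :: "real \<Rightarrow> 'a \<Rightarrow> real" and R :: "real \<Rightarrow> real" and k :: nat
  assumes gauss: "centered_gaussian_field M g"
    and cont: "\<forall>\<omega>\<in>space M. continuous_on UNIV (\<lambda>x. g x \<omega>)"
    and stat: "stationary_cov M g R"
    and alpha: "0 < \<alpha>" "\<alpha> < 1"
    and R1: "\<And>z. \<bar>R z\<bar> \<le> 1" and R2: "\<And>z. z \<noteq> 0 \<Longrightarrow> \<bar>R z\<bar> \<le> C * \<bar>z\<bar> powr (-\<alpha>)"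
    and p: "0 < p" "p \<le> 2 * real k"
    and eps: "\<epsilon> > 0" and yx: "y < x"
  shows "(\<integral>\<^sup>+\<omega>. ennreal (\<bar>W_tilde \<alpha> g \<epsilon> x \<omega> - W_tilde \<alpha> g \<epsilon> y \<omega>\<bar> powr p) \<partial>M)
    \<le> ennreal ((1 + fact (2 * k) / (2 ^ k * fact k)) * (1 + 2 * C / (1 - \<alpha>)) powr (p / 2)
                * (x - y) powr (p * (1 - \<alpha> / 2)))"
proof -
  define G :: real where "G = 1 + fact (2 * k) / (2 ^ k * fact k)"
  define K where "K = 1 + 2 * C / (1 - \<alpha>)"
  define \<Delta> where "\<Delta> = x - y"
  define c where "c n = \<epsilon> powr (-\<alpha>/2) * (\<Delta> / n)" for n :: nat
  define t where "t n i = (y + real i * (\<Delta> / n)) / \<epsilon>" for n i :: nat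
  define S where "S n \<omega> = (\<Sum>i<n. c n * g (t n i) \<omega>)" for n \<omega>
  define V where "V n = (\<Sum>i<n. \<Sum>j<n. c n * c n * R (t n i - t n j))" for n
  have \<Delta>: "\<Delta> > 0"
    using yx by (simp add: \<Delta>_def)
  have "C \<ge> 0"
    using R2[of 1] abs_ge_zero[of "R 1"] by simp
  then have K: "K > 0"
    using alpha by (simp add: K_def add_pos_nonneg)
  have [measurable]: "g s \<in> borel_measurable M" for s
    using gauss by (simp add: centered_gaussian_field_def)
  have S_measurable: "S n \<in> borel_measurable M" for n
    unfolding S_def by measurable
  have V_nonneg: "V n \<ge> 0" for n
  proof -
    have "V n = (\<integral>\<omega>. (S n \<omega>)\<^sup>2 \<partial>M)"
      using stationary_cov_integral_sum_square[OF stat, where n = n and c = "\<lambda>_. c n" and a = "t n"]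
      by (simp add: V_def S_def)
    then show ?thesis
      by simp
  qed
  have "eventually (\<lambda>n. V n \<le> K * \<Delta> powr (2 - \<alpha>)) sequentially"
    unfolding V_def c_def t_def K_def by (rule riemann_sum_variance_eventually_le[OF alpha R1 R2 eps \<Delta>])
  then have S_bound: "eventually (\<lambda>n. (\<integral>\<^sup>+\<omega>. ennreal (\<bar>S n \<omega>\<bar> powr p) \<partial>M)
      \<le> ennreal (G * K powr (p / 2) * \<Delta> powr (p * (1 - \<alpha> / 2)))) sequentially"
  proof eventually_elim
    case (elim n)
    then have "V n powr (p / 2) \<le> (K * \<Delta> powr (2 - \<alpha>)) powr (p / 2)"
      using V_nonneg[of n] p by (intro powr_mono2) auto
    also have "\<dots> = K powr (p / 2) * \<Delta> powr (p * (1 - \<alpha> / 2))"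
      using K \<Delta> by (simp add: powr_mult powr_powr field_simps)
    finally have "G * V n powr (p / 2) \<le> G * K powr (p / 2) * \<Delta> powr (p * (1 - \<alpha> / 2))"
      by (simp add: G_def mult.assoc mult_left_mono add_nonneg_nonneg)
    moreover have "(\<integral>\<^sup>+\<omega>. ennreal (\<bar>S n \<omega>\<bar> powr p) \<partial>M) \<le> ennreal (G * V n powr (p / 2))"
      using centered_gaussian_field_sum_abs_moment_le[OF gauss stat less_imp_le[OF p(1)] p(2),
          where n = n and c = "\<lambda>_. c n" and a = "t n"]
      by (simp add: S_def V_def G_def)
    ultimately show ?case
      by (meson ennreal_leI order_trans)
  qed
  have S_lim: "(\<lambda>n. S n \<omega>) \<longlonglongrightarrow> W_tilde \<alpha> g \<epsilon> x \<omega> - W_tilde \<alpha> g \<epsilon> y \<omega>" if "\<omega> \<in> space M" for \<omega>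
    using W_tilde_diff_riemann_sum_tendsto[of g \<omega> \<epsilon> y x \<alpha>] cont that eps yx
    by (simp add: S_def c_def t_def \<Delta>_def mult.assoc)
  show ?thesis
    using nn_integral_abs_powr_le_of_tendsto[where S = S, OF S_measurable S_lim p(1) S_bound]
    by (simp add: G_def K_def \<Delta>_def)
qed

lemma spectral_cov_abs_le:
  fixes \<mu> :: "real measure" and R :: "real \<Rightarrow> real"
  assumes "finite_measure \<mu>" and sets: "sets \<mu> = sets borel"
    and spectral: "\<forall>x. R x = (\<integral>\<xi>. cos (x * \<xi>) \<partial>\<mu>)"
  shows "\<bar>R z\<bar> \<le> R 0"
proof -
  interpret finite_measure \<mu> by fact
  have "integrable \<mu> (\<lambda>\<xi>. cos (z * \<xi>))"
  proof (rule integrable_const_bound[where B=1])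
    show "(\<lambda>\<xi>. cos (z * \<xi>)) \<in> borel_measurable \<mu>"
      unfolding measurable_cong_sets[OF sets refl] by measurable
  qed auto
  then have "(\<integral>\<xi>. cos (z * \<xi>) \<partial>\<mu>) \<le> (\<integral>\<xi>. 1 \<partial>\<mu>)" and "(\<integral>\<xi>. - cos (z * \<xi>) \<partial>\<mu>) \<le> (\<integral>\<xi>. 1 \<partial>\<mu>)"
    by (intro integral_mono; simp)+
  then show ?thesis
    using spectral by (simp add: abs_le_iff)
qed

lemma cov_abs_le_powr:
  fixes R L :: "real \<Rightarrow> real"
  assumes R1: "\<And>z. \<bar>R z\<bar> \<le> 1"
    and covR: "\<forall>x. x \<noteq> 0 \<longrightarrow> R x = \<kappa> * \<bar>x\<bar> powr (-\<alpha>) * L \<bar>x\<bar>"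
    and L1: "\<forall>\<^sub>F t in at_top. L t = 1" and \<kappa>: "\<kappa> > 0" and \<alpha>: "\<alpha> > 0"
  shows "\<exists>C>0. \<forall>z. z \<noteq> 0 \<longrightarrow> \<bar>R z\<bar> \<le> C * \<bar>z\<bar> powr (-\<alpha>)"
proof -
  obtain N where N: "\<And>t. t \<ge> N \<Longrightarrow> L t = 1"
    using L1 by (auto simp: eventually_at_top_linorder)
  define T where "T = max N 1"
  have T: "T > 0" "\<And>t. t \<ge> T \<Longrightarrow> L t = 1"
    using N by (auto simp: T_def)
  have "\<bar>R z\<bar> \<le> (\<kappa> + T powr \<alpha>) * \<bar>z\<bar> powr (-\<alpha>)" if z: "z \<noteq> 0" for z
  proof (cases "\<bar>z\<bar> \<ge> T")
    case True
    then have "\<bar>R z\<bar> = \<kappa> * \<bar>z\<bar> powr (-\<alpha>)"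
      using covR z T \<kappa> by simp
    then show ?thesis
      by (simp add: distrib_right)
  next
    case False
    have "1 = T powr \<alpha> * T powr (-\<alpha>)"
      using T by (simp flip: powr_add)
    also have "\<dots> \<le> T powr \<alpha> * \<bar>z\<bar> powr (-\<alpha>)"
      using False z \<alpha> by (intro mult_left_mono powr_mono2') auto
    finally show ?thesis
      using R1[of z] \<kappa> by (smt (verit) distrib_right powr_ge_zero mult_nonneg_nonneg)
  qed
  moreover have "\<kappa> + T powr \<alpha> > 0"
    using \<kappa> by (simp add: add_pos_nonneg)
  ultimately show ?thesis
    by blast
qed

theorem lemma5p3:
  fixes M :: "'a measure" and g :: "real \<Rightarrow> 'a \<Rightarrow> real"
    and R L :: "real \<Rightarrow> real" and \<mu> :: "real measure"
    and \<alpha> \<kappa> :: real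
  assumes prob: "prob_space M"
    and gauss: "centered_gaussian_field M g"
    and cont: "\<forall>\<omega>\<in>space M. continuous_on UNIV (\<lambda>x. g x \<omega>)"
    and stat: "stationary_cov M g R"
    and var1: "R 0 = 1"
    and alpha: "0 < \<alpha>" "\<alpha> < 1"
    and kappa: "\<kappa> > 0"
    and covR: "\<forall>x. x \<noteq> 0 \<longrightarrow> R x = \<kappa> * \<bar>x\<bar> powr (-\<alpha>) * L \<bar>x\<bar>"
    and Lsv: "slowly_varying L"
    and L1: "\<forall>\<^sub>F t in at_top. L t = 1"
    and mu_fin: "finite_measure \<mu>" and mu_sets: "sets \<mu> = sets borel"
    and spectral: "\<forall>x. R x = (\<integral>\<xi>. cos (x * \<xi>) \<partial>\<mu>)"
    and mu_nz: "AE \<xi> in \<mu>. \<xi> \<noteq> 0"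
    and mu_int: "integrable \<mu> (\<lambda>\<xi>. \<bar>\<xi>\<bar> powr (\<alpha> - 1))"
  shows "\<forall>p::real. p \<ge> 2 \<longrightarrow> (\<exists>C>0. \<forall>\<epsilon>>0. \<forall>x y.
           (\<integral>\<^sup>+ \<omega>. ennreal (\<bar>W_tilde \<alpha> g \<epsilon> x \<omega> - W_tilde \<alpha> g \<epsilon> y \<omega>\<bar> powr p) \<partial>M)
             \<le> ennreal (C * \<bar>x - y\<bar> powr (p * (1 - \<alpha>/2))))"
proof (intro allI impI)
  fix p :: real assume "p \<ge> 2"
  have R1: "\<bar>R z\<bar> \<le> 1" for z
    using spectral_cov_abs_le[OF mu_fin mu_sets spectral] var1 by simp
  obtain C where C: "C > 0" and R2: "\<And>z. z \<noteq> 0 \<Longrightarrow> \<bar>R z\<bar> \<le> C * \<bar>z\<bar> powr (-\<alpha>)"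
    using cov_abs_le_powr[OF R1 covR L1 kappa alpha(1)] by blast
  define k where "k = nat \<lceil>p / 2\<rceil>"
  have p: "0 < p" "p \<le> 2 * real k"
    using \<open>p \<ge> 2\<close> by (auto simp: k_def) linarith
  define Cp where "Cp = (1 + fact (2 * k) / (2 ^ k * fact k)) * (1 + 2 * C / (1 - \<alpha>)) powr (p / 2)"
  have "2 * C / (1 - \<alpha>) > 0"
    using C alpha by simp
  then have "Cp > 0"
    by (simp add: Cp_def add_pos_nonneg)
  moreover have "(\<integral>\<^sup>+ \<omega>. ennreal (\<bar>W_tilde \<alpha> g \<epsilon> x \<omega> - W_tilde \<alpha> g \<epsilon> y \<omega>\<bar> powr p) \<partial>M)
      \<le> ennreal (Cp * \<bar>x - y\<bar> powr (p * (1 - \<alpha>/2)))" if "\<epsilon> > 0" for \<epsilon> x y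
  proof (cases x y rule: linorder_cases)
    case less
    then show ?thesis
      using W_tilde_increment_moment_le[OF gauss cont stat alpha R1 R2 p \<open>\<epsilon> > 0\<close> less]
      by (simp add: Cp_def abs_minus_commute)
  next
    case equal
    then show ?thesis by simp
  next
    case greater
    then show ?thesis
      using W_tilde_increment_moment_le[OF gauss cont stat alpha R1 R2 p \<open>\<epsilon> > 0\<close> greater]
      by (simp add: Cp_def)
  qed
  ultimately show "\<exists>C>0. \<forall>\<epsilon>>0. \<forall>x y.
      (\<integral>\<^sup>+ \<omega>. ennreal (\<bar>W_tilde \<alpha> g \<epsilon> x \<omega> - W_tilde \<alpha> g \<epsilon> y \<omega>\<bar> powr p) \<partial>M)
        \<le> ennreal (C * \<bar>x - y\<bar> powr (p * (1 - \<alpha>/2)))"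
    by blast
qed

end
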